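(* Let $R$ be a finite Frobenius ring and $\mathcal P_{\rm hom}$ the partition of $R$ induced by the normalized homogeneous weight $\omega$. Then for every block $P$ of $\mathcal P_{\rm hom}$ and every $a\in R$, the sum $\sum_{b\in P}\chi(ab)$ is the same for all generating characters $\chi$ of $R$ (and is a real number). Consequently the right $\chi$-dual partition of $\mathcal P_{\rm hom}$ does not depend on the choice of the generating character $\chi$. *)

theory Defs
  imports Complex_Main
begin

definition additive_character :: "('a::ring_1 \<Rightarrow> complex) \<Rightarrow> bool" where
  "additive_character \<chi> \<longleftrightarrow>
     (\<forall>x y. \<chi> (x + y) = \<chi> x * \<chi> y) \<and> (\<forall>x. cmod (\<chi> x) = 1)"

definition left_ideal :: "'a::ring_1 set \<Rightarrow> bool" where
  "left_ideal I \<longleftrightarrow> 0 \<in> I \<and> (\<forall>x\<in>I. \<forall>y\<in>I. x - y \<in> I) \<and> (\<forall>r x. x \<in> I \<longrightarrow> r * x \<in> I)"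

text \<open>A generating character: an additive character whose kernel contains no
  nonzero left ideal (for finite rings equivalent to: no nonzero right ideal).\<close>
definition generating_character :: "('a::ring_1 \<Rightarrow> complex) \<Rightarrow> bool" where
  "generating_character \<chi> \<longleftrightarrow> additive_character \<chi> \<and>
     (\<forall>I. left_ideal I \<and> I \<subseteq> {x. \<chi> x = 1} \<longrightarrow> I = {0})"

definition frobenius_ring :: "'a::{ring_1,finite} itself \<Rightarrow> bool" where
  "frobenius_ring _ \<longleftrightarrow> (\<exists>\<chi>::'a \<Rightarrow> complex. generating_character \<chi>)"

definition lprinc :: "'a::ring_1 \<Rightarrow> 'a set" where
  "lprinc x = range (\<lambda>r. r * x)"

definition homogeneous_weight :: "('a::{ring_1,finite} \<Rightarrow> real) \<Rightarrow> real \<Rightarrow> bool" where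
  "homogeneous_weight \<omega> \<gamma> \<longleftrightarrow> \<omega> 0 = 0 \<and>
     (\<forall>x y. lprinc x = lprinc y \<longrightarrow> \<omega> x = \<omega> y) \<and>
     (\<forall>x. x \<noteq> 0 \<longrightarrow> (\<Sum>y\<in>lprinc x. \<omega> y) = \<gamma> * real (card (lprinc x)))"

definition normalized_homogeneous_weight :: "('a::{ring_1,finite} \<Rightarrow> real) \<Rightarrow> bool" where
  "normalized_homogeneous_weight \<omega> \<longleftrightarrow> homogeneous_weight \<omega> 1"

definition induced_partition :: "('a \<Rightarrow> 'b) \<Rightarrow> 'a set set" where
  "induced_partition f = {{x. f x = f a} | a. True}"

definition right_dual_partition ::
  "('a::{ring_1,finite} \<Rightarrow> complex) \<Rightarrow> 'a set set \<Rightarrow> 'a set set" where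
  "right_dual_partition \<chi> \<P> =
     {{a'. \<forall>P\<in>\<P>. (\<Sum>b\<in>P. \<chi> (a' * b)) = (\<Sum>b\<in>P. \<chi> (a * b))} | a. True}"

end

theory Submission
  imports Defs
begin

text \<open>Fix a generating character \<open>\<chi>\<^sub>1\<close>. By orthogonality every additive character is
  \<open>\<chi>\<^sub>2 = \<chi>\<^sub>1(\<cdot> r)\<close> for some \<open>r\<close>; if \<open>\<chi>\<^sub>2\<close> is generating, right multiplication by \<open>r\<close> is
  injective. A homogeneous weight is uniquely determined by its axioms (induction along
  the lattice of principal left ideals), and \<open>\<omega>(\<cdot> r)\<close> satisfies the same axioms, so
  \<open>\<omega>(x r) = \<omega>(x)\<close>. Hence \<open>b \<mapsto> b r\<close> permutes every block \<open>P\<close> of the weight partition and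
  \<open>\<Sum>\<^sub>b\<^sub>\<in>\<^sub>P \<chi>\<^sub>2(a b) = \<Sum>\<^sub>b\<^sub>\<in>\<^sub>P \<chi>\<^sub>1(a b r) = \<Sum>\<^sub>b\<^sub>\<in>\<^sub>P \<chi>\<^sub>1(a b)\<close>. Blocks are closed under negation
  and \<open>\<chi>(-x)\<close> is the conjugate of \<open>\<chi>(x)\<close>, so these sums are real.\<close>

lemma additive_character_zero:
  assumes "additive_character \<chi>" shows "\<chi> 0 = 1"
proof -
  have "cmod (\<chi> 0) = 1" and "\<chi> (0 + 0) = \<chi> 0 * \<chi> 0"
    using assms unfolding additive_character_def by blast+
  then show ?thesis by (metis add_0 mult_cancel_right1 norm_zero zero_neq_one)
qed

lemma additive_character_cnj_mult:
  assumes "additive_character \<chi>" shows "cnj (\<chi> x) * \<chi> x = 1"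
  using assms complex_norm_square[of "\<chi> x"]
  unfolding additive_character_def by (simp add: mult.commute)

lemma additive_character_uminus:
  assumes "additive_character \<chi>" shows "\<chi> (- x) = cnj (\<chi> x)"
proof -
  have "\<chi> x * \<chi> (- x) = 1"
    using assms additive_character_zero[OF assms]
    unfolding additive_character_def by (metis add.right_inverse)
  then have "cnj (\<chi> x) * \<chi> x * \<chi> (- x) = cnj (\<chi> x)" by (simp add: mult.assoc)
  then show ?thesis by (simp add: additive_character_cnj_mult[OF assms])
qed

lemma additive_character_mult_right:
  "additive_character \<chi> \<Longrightarrow> additive_character (\<lambda>x. \<chi> (x * r))"
  unfolding additive_character_def by (simp add: distrib_right)

lemma additive_character_mult_left:
  "additive_character \<chi> \<Longrightarrow> additive_character (\<lambda>x. \<chi> (r * x))"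
  unfolding additive_character_def by (simp add: distrib_left)

lemma additive_character_mult_cnj:
  assumes "additive_character \<chi>" "additive_character \<psi>"
  shows "additive_character (\<lambda>x. \<chi> x * cnj (\<psi> x))"
  using assms unfolding additive_character_def by (simp add: norm_mult)

lemma additive_character_sum:
  fixes \<chi> :: "'a::{ring_1,finite} \<Rightarrow> complex"
  assumes "additive_character \<chi>"
  shows "(\<Sum>x\<in>UNIV. \<chi> x) = (if \<forall>x. \<chi> x = 1 then of_nat (card (UNIV :: 'a set)) else 0)"
proof (cases "\<forall>x. \<chi> x = 1")
  case False
  then obtain z where z: "\<chi> z \<noteq> 1" by blast
  have "(\<Sum>x\<in>UNIV. \<chi> x) = (\<Sum>x\<in>UNIV. \<chi> (z + x))"
    by (rule sum.reindex_bij_witness[of _ "\<lambda>x. z + x" "\<lambda>x. x - z"]) auto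
  also have "\<dots> = \<chi> z * (\<Sum>x\<in>UNIV. \<chi> x)"
    using assms unfolding additive_character_def by (simp add: sum_distrib_left)
  finally have "(1 - \<chi> z) * (\<Sum>x\<in>UNIV. \<chi> x) = 0" by (simp add: algebra_simps)
  with z False show ?thesis by simp
qed simp

lemma mem_lprinc: "x \<in> lprinc x"
  unfolding lprinc_def by (metis mult_1 rangeI)

lemma left_ideal_lprinc: "left_ideal (lprinc x)"
  unfolding left_ideal_def lprinc_def
proof (intro conjI ballI allI impI)
  show "0 \<in> range (\<lambda>r. r * x)" by (rule range_eqI[where x = 0]) simp
next
  fix u v assume "u \<in> range (\<lambda>r. r * x)" "v \<in> range (\<lambda>r. r * x)"
  then show "u - v \<in> range (\<lambda>r. r * x)" by (auto simp: left_diff_distrib[symmetric])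
next
  fix s u assume "u \<in> range (\<lambda>r. r * x)"
  then show "s * u \<in> range (\<lambda>r. r * x)" by (auto simp: mult.assoc[symmetric])
qed

lemma lprinc_subset: "y \<in> lprinc x \<Longrightarrow> lprinc y \<subseteq> lprinc x"
  unfolding lprinc_def by (auto simp: mult.assoc[symmetric])

lemma lprinc_uminus: "lprinc (- x) = lprinc (x :: 'a::ring_1)"
proof -
  have "range (\<lambda>r. r * - x) = (\<lambda>r. r * x) ` range uminus"
    by (simp only: image_image mult_minus_left mult_minus_right)
  also have "range uminus = (UNIV :: 'a set)" by (metis surjI minus_minus)
  finally show ?thesis unfolding lprinc_def .
qed

lemma lprinc_mult_right: "lprinc (x * r) = (\<lambda>t. t * r) ` lprinc x"
  unfolding lprinc_def by (auto simp: mult.assoc image_image)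

lemma generating_character_left_nondegenerate:
  assumes "generating_character \<chi>" "\<forall>x. \<chi> (x * r) = 1"
  shows "r = 0"
proof -
  have "lprinc r \<subseteq> {y. \<chi> y = 1}" using assms(2) unfolding lprinc_def by auto
  then have "lprinc r = {0}"
    using assms(1) left_ideal_lprinc unfolding generating_character_def by blast
  then show ?thesis using mem_lprinc[of r] by simp
qed

lemma generating_character_right_nondegenerate:
  fixes \<chi> :: "'a::{ring_1,finite} \<Rightarrow> complex"
  assumes gen: "generating_character \<chi>" and z: "\<forall>r. \<chi> (z * r) = 1"
  shows "z = 0"
proof -
  have \<chi>: "additive_character \<chi>" using gen unfolding generating_character_def by blast
  define J where "J = {x. \<forall>r. \<chi> (x * r) = 1}"
  let ?N = "of_nat (card (UNIV :: 'a set)) :: complex"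
  \<comment> \<open>Count \<open>\<Sum>\<^sub>x \<Sum>\<^sub>r \<chi>(x r)\<close> in both orders: the right kernel \<open>J\<close> has exactly one element.\<close>
  have "(\<Sum>x\<in>UNIV. \<Sum>r\<in>UNIV. \<chi> (x * r)) = (\<Sum>x\<in>UNIV. if x \<in> J then ?N else 0)"
    by (rule sum.cong) (simp_all add: additive_character_sum[OF additive_character_mult_left[OF \<chi>]] J_def)
  also have "\<dots> = of_nat (card J) * ?N"
    by (simp add: sum.If_cases)
  finally have rows: "(\<Sum>x\<in>UNIV. \<Sum>r\<in>UNIV. \<chi> (x * r)) = of_nat (card J) * ?N" .
  have column: "(\<Sum>x\<in>UNIV. \<chi> (x * r)) = (if r = 0 then ?N else 0)" for r
    using generating_character_left_nondegenerate[OF gen, of r] additive_character_zero[OF \<chi>]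
    by (auto simp: additive_character_sum[OF additive_character_mult_right[OF \<chi>]])
  have "(\<Sum>r\<in>UNIV. \<Sum>x\<in>UNIV. \<chi> (x * r)) = ?N" by (simp add: column)
  then have "of_nat (card J) * ?N = ?N" using rows sum.swap[of "\<lambda>x r. \<chi> (x * r)"] by simp
  then have "card J = 1" by simp
  moreover have "0 \<in> J" "z \<in> J" unfolding J_def using additive_character_zero[OF \<chi>] z by auto
  ultimately show ?thesis by (metis card_1_singletonE singletonD)
qed

lemma additive_character_eq_generating_mult_right:
  fixes \<chi> \<psi> :: "'a::{ring_1,finite} \<Rightarrow> complex"
  assumes gen: "generating_character \<chi>" and \<psi>: "additive_character \<psi>"
  obtains r where "\<And>x. \<psi> x = \<chi> (x * r)"
proof -
  have \<chi>: "additive_character \<chi>" using gen unfolding generating_character_def by blast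
  let ?N = "of_nat (card (UNIV :: 'a set)) :: complex"
  have row: "(\<Sum>r\<in>UNIV. \<chi> (x * r)) = (if x = 0 then ?N else 0)" for x
    using generating_character_right_nondegenerate[OF gen, of x] additive_character_zero[OF \<chi>]
    by (auto simp: additive_character_sum[OF additive_character_mult_left[OF \<chi>]])
  have "(\<Sum>r\<in>UNIV. \<Sum>x\<in>UNIV. \<psi> x * cnj (\<chi> (x * r))) = (\<Sum>x\<in>UNIV. \<psi> x * cnj (\<Sum>r\<in>UNIV. \<chi> (x * r)))"
    by (subst sum.swap) (simp add: sum_distrib_left)
  also have "\<dots> = ?N"
    by (simp add: row additive_character_zero[OF \<psi>] if_distrib cong: if_cong)
  finally have "(\<Sum>r\<in>UNIV. \<Sum>x\<in>UNIV. \<psi> x * cnj (\<chi> (x * r))) \<noteq> 0" by simp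
  then obtain r where r: "(\<Sum>x\<in>UNIV. \<psi> x * cnj (\<chi> (x * r))) \<noteq> 0"
    by (meson sum.neutral UNIV_I)
  have \<phi>: "additive_character (\<lambda>x. \<psi> x * cnj (\<chi> (x * r)))"
    by (rule additive_character_mult_cnj[OF \<psi> additive_character_mult_right[OF \<chi>]])
  have trivial: "\<psi> x * cnj (\<chi> (x * r)) = 1" for x
    using additive_character_sum[OF \<phi>] r by (auto split: if_splits)
  have "\<psi> x = \<chi> (x * r)" for x
  proof -
    have "\<psi> x = \<psi> x * (cnj (\<chi> (x * r)) * \<chi> (x * r))"
      by (simp add: additive_character_cnj_mult[OF \<chi>])
    also have "\<dots> = \<chi> (x * r)" by (simp add: mult.assoc[symmetric] trivial)
    finally show ?thesis .
  qed
  then show ?thesis by (rule that)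
qed

lemma generating_character_mult_right_inj:
  assumes "generating_character (\<lambda>x. \<chi> (x * r))" "additive_character \<chi>"
  shows "inj (\<lambda>x. x * r)"
proof -
  let ?I = "{x. x * r = 0}"
  have "left_ideal ?I" unfolding left_ideal_def by (auto simp: left_diff_distrib mult.assoc)
  moreover have "?I \<subseteq> {x. \<chi> (x * r) = 1}" using additive_character_zero[OF assms(2)] by auto
  ultimately have "?I = {0}" using assms(1) unfolding generating_character_def by blast
  then show ?thesis
    by (intro injI) (metis (mono_tags) left_diff_distrib mem_Collect_eq right_minus_eq singletonD)
qed

lemma vanishing_on_lprinc_sums:
  fixes d :: "'a::{ring_1,finite} \<Rightarrow> real"
  assumes zero: "d 0 = 0"
    and invariant: "\<And>x y. lprinc x = lprinc y \<Longrightarrow> d x = d y"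
    and sums: "\<And>x. x \<noteq> 0 \<Longrightarrow> (\<Sum>y\<in>lprinc x. d y) = 0"
  shows "d x = 0"
proof (induction "card (lprinc x)" arbitrary: x rule: less_induct)
  case less
  show ?case
  proof (cases "x = 0")
    case False
    define G where "G = {y \<in> lprinc x. lprinc y = lprinc x}"
    have "G \<subseteq> lprinc x" and "x \<in> G" unfolding G_def using mem_lprinc by blast+
    have rest: "(\<Sum>y\<in>lprinc x - G. d y) = 0"
    proof (rule sum.neutral, rule ballI)
      fix y assume "y \<in> lprinc x - G"
      then have "lprinc y \<subset> lprinc x" using lprinc_subset unfolding G_def by blast
      then show "d y = 0" by (intro less.hyps psubset_card_mono) simp_all
    qed
    have "(\<Sum>y\<in>G. d y) = (\<Sum>y\<in>G. d x)"
      by (rule sum.cong) (auto simp: G_def intro: invariant)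
    then have "real (card G) * d x = 0"
      using sums[OF False] sum.subset_diff[OF \<open>G \<subseteq> lprinc x\<close>, of d] rest by simp
    moreover have "card G \<noteq> 0" using \<open>x \<in> G\<close> by (auto simp: card_eq_0_iff)
    ultimately show ?thesis by simp
  qed (simp add: zero)
qed

lemma homogeneous_weight_zero: "homogeneous_weight \<omega> \<gamma> \<Longrightarrow> \<omega> 0 = 0"
  unfolding homogeneous_weight_def by blast

lemma homogeneous_weight_sum_lprinc:
  "homogeneous_weight \<omega> \<gamma> \<Longrightarrow> x \<noteq> 0 \<Longrightarrow> (\<Sum>y\<in>lprinc x. \<omega> y) = \<gamma> * real (card (lprinc x))"
  unfolding homogeneous_weight_def by blast

lemma homogeneous_weight_lprinc_eq:
  "homogeneous_weight \<omega> \<gamma> \<Longrightarrow> lprinc x = lprinc y \<Longrightarrow> \<omega> x = \<omega> y"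
  unfolding homogeneous_weight_def by blast

lemma homogeneous_weight_unique:
  assumes hw: "homogeneous_weight \<omega> \<gamma>" and hw': "homogeneous_weight \<omega>' \<gamma>"
  shows "\<omega> = \<omega>'"
proof
  fix x
  have "\<omega> x - \<omega>' x = 0"
  proof (rule vanishing_on_lprinc_sums[where d = "\<lambda>x. \<omega> x - \<omega>' x"])
    show "\<omega> 0 - \<omega>' 0 = 0"
      by (simp add: homogeneous_weight_zero[OF hw] homogeneous_weight_zero[OF hw'])
    show "\<omega> x - \<omega>' x = \<omega> y - \<omega>' y" if "lprinc x = lprinc y" for x y
      using homogeneous_weight_lprinc_eq[OF hw that] homogeneous_weight_lprinc_eq[OF hw' that]
      by simp
    show "(\<Sum>y\<in>lprinc x. \<omega> y - \<omega>' y) = 0" if "x \<noteq> 0" for x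
      by (simp add: sum_subtractf homogeneous_weight_sum_lprinc[OF hw that]
          homogeneous_weight_sum_lprinc[OF hw' that])
  qed
  then show "\<omega> x = \<omega>' x" by simp
qed

lemma homogeneous_weight_mult_right:
  fixes \<omega> :: "'a::{ring_1,finite} \<Rightarrow> real"
  assumes hw: "homogeneous_weight \<omega> \<gamma>" and inj: "inj (\<lambda>x::'a. x * r)"
  shows "homogeneous_weight (\<lambda>x. \<omega> (x * r)) \<gamma>"
  unfolding homogeneous_weight_def
proof (intro conjI allI impI)
  show "\<omega> (0 * r) = 0" by (simp add: homogeneous_weight_zero[OF hw])
next
  fix x y :: 'a assume "lprinc x = lprinc y"
  then have "lprinc (x * r) = lprinc (y * r)" by (simp add: lprinc_mult_right)
  then show "\<omega> (x * r) = \<omega> (y * r)" by (rule homogeneous_weight_lprinc_eq[OF hw])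
next
  fix x :: 'a assume "x \<noteq> 0"
  then have "x * r \<noteq> 0" using inj_eq[OF inj, of x 0] by simp
  have inj_on: "inj_on (\<lambda>t. t * r) (lprinc x)" using inj by (rule inj_on_subset) simp
  have "(\<Sum>y\<in>lprinc x. \<omega> (y * r)) = (\<Sum>y\<in>lprinc (x * r). \<omega> y)"
    unfolding lprinc_mult_right by (simp add: sum.reindex[OF inj_on])
  also have "\<dots> = \<gamma> * real (card (lprinc (x * r)))"
    by (rule homogeneous_weight_sum_lprinc[OF hw \<open>x * r \<noteq> 0\<close>])
  also have "card (lprinc (x * r)) = card (lprinc x)"
    unfolding lprinc_mult_right by (rule card_image[OF inj_on])
  finally show "(\<Sum>y\<in>lprinc x. \<omega> (y * r)) = \<gamma> * real (card (lprinc x))" .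
qed

lemma homogeneous_weight_mult_right_eq:
  fixes \<omega> :: "'a::{ring_1,finite} \<Rightarrow> real"
  assumes "homogeneous_weight \<omega> \<gamma>" "inj (\<lambda>x::'a. x * r)"
  shows "\<omega> (x * r) = \<omega> x"
proof -
  have "(\<lambda>x. \<omega> (x * r)) = \<omega>"
    by (rule homogeneous_weight_unique[OF homogeneous_weight_mult_right[OF assms] assms(1)])
  then show ?thesis by (rule fun_cong)
qed

lemma homogeneous_weight_uminus:
  "homogeneous_weight \<omega> \<gamma> \<Longrightarrow> \<omega> (- x) = \<omega> x"
  using homogeneous_weight_lprinc_eq lprinc_uminus by blast

lemma sum_level_set_reindex:
  fixes f :: "'a::finite \<Rightarrow> 'a"
  assumes inj: "inj f" and invariant: "\<And>x. g (f x) = g x"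
  shows "(\<Sum>b\<in>{x. g x = c}. h (f b)) = (\<Sum>b\<in>{x. g x = c}. h b)"
proof -
  let ?P = "{x. g x = c}"
  have "f ` ?P \<subseteq> ?P" using invariant by auto
  moreover have "card (f ` ?P) = card ?P" using inj by (simp add: card_image inj_on_subset)
  ultimately have "f ` ?P = ?P" by (intro card_subset_eq) simp_all
  then show ?thesis
    using sum.reindex[OF inj_on_subset[OF inj], of ?P h] by simp
qed

lemma generating_character_sum_level_set_eq:
  fixes \<chi>\<^sub>1 \<chi>\<^sub>2 :: "'a::{ring_1,finite} \<Rightarrow> complex"
  assumes hw: "homogeneous_weight \<omega> \<gamma>"
    and gen1: "generating_character \<chi>\<^sub>1" and gen2: "generating_character \<chi>\<^sub>2"
  shows "(\<Sum>b\<in>{x. \<omega> x = c}. \<chi>\<^sub>2 (a * b)) = (\<Sum>b\<in>{x. \<omega> x = c}. \<chi>\<^sub>1 (a * b))"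
proof -
  have \<chi>\<^sub>1: "additive_character \<chi>\<^sub>1" and \<chi>\<^sub>2: "additive_character \<chi>\<^sub>2"
    using gen1 gen2 unfolding generating_character_def by blast+
  obtain r where r: "\<And>x. \<chi>\<^sub>2 x = \<chi>\<^sub>1 (x * r)"
    using additive_character_eq_generating_mult_right[OF gen1 \<chi>\<^sub>2] by blast
  have "\<chi>\<^sub>2 = (\<lambda>x. \<chi>\<^sub>1 (x * r))" using r by (rule ext)
  with gen2 have "generating_character (\<lambda>x. \<chi>\<^sub>1 (x * r))" by simp
  then have inj: "inj (\<lambda>x::'a. x * r)" using \<chi>\<^sub>1 by (rule generating_character_mult_right_inj)
  have "(\<Sum>b\<in>{x. \<omega> x = c}. \<chi>\<^sub>2 (a * b)) = (\<Sum>b\<in>{x. \<omega> x = c}. \<chi>\<^sub>1 (a * (b * r)))"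
    by (simp add: r mult.assoc)
  also have "\<dots> = (\<Sum>b\<in>{x. \<omega> x = c}. \<chi>\<^sub>1 (a * b))"
    using homogeneous_weight_mult_right_eq[OF hw inj]
    by (rule sum_level_set_reindex[OF inj, where h = "\<lambda>b. \<chi>\<^sub>1 (a * b)"])
  finally show ?thesis .
qed

lemma additive_character_sum_level_set_real:
  fixes \<chi> :: "'a::{ring_1,finite} \<Rightarrow> complex"
  assumes hw: "homogeneous_weight \<omega> \<gamma>" and \<chi>: "additive_character \<chi>"
  shows "(\<Sum>b\<in>{x. \<omega> x = c}. \<chi> (a * b)) \<in> \<real>"
proof -
  have "cnj (\<Sum>b\<in>{x. \<omega> x = c}. \<chi> (a * b)) = (\<Sum>b\<in>{x. \<omega> x = c}. \<chi> (a * - b))"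
    by (simp add: additive_character_uminus[OF \<chi>])
  also have "\<dots> = (\<Sum>b\<in>{x. \<omega> x = c}. \<chi> (a * b))"
    using homogeneous_weight_uminus[OF hw]
    by (rule sum_level_set_reindex[OF inj_uminus, where h = "\<lambda>b. \<chi> (a * b)"])
  finally show ?thesis by (simp add: Reals_cnj_iff)
qed

theorem mainTheorem2:
  fixes \<omega> :: "'a::{ring_1,finite} \<Rightarrow> real"
  assumes "frobenius_ring TYPE('a)"
    and "normalized_homogeneous_weight \<omega>"
  shows "(\<forall>P\<in>induced_partition \<omega>. \<forall>a::'a. \<forall>\<chi>1 \<chi>2.
            generating_character \<chi>1 \<and> generating_character \<chi>2 \<longrightarrow>
              (\<Sum>b\<in>P. \<chi>1 (a * b)) = (\<Sum>b\<in>P. \<chi>2 (a * b))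
              \<and> (\<Sum>b\<in>P. \<chi>1 (a * b)) \<in> \<real>)
       \<and> (\<forall>\<chi>1 \<chi>2. generating_character \<chi>1 \<and> generating_character \<chi>2 \<longrightarrow>
            right_dual_partition \<chi>1 (induced_partition \<omega>)
            = right_dual_partition \<chi>2 (induced_partition \<omega>))"
proof -
  have hw: "homogeneous_weight \<omega> 1"
    using assms(2) unfolding normalized_homogeneous_weight_def .
  have blocks: "(\<Sum>b\<in>P. \<chi>1 (a * b)) = (\<Sum>b\<in>P. \<chi>2 (a * b)) \<and> (\<Sum>b\<in>P. \<chi>1 (a * b)) \<in> \<real>"
    if block: "P \<in> induced_partition \<omega>"
      and gen1: "generating_character \<chi>1" and gen2: "generating_character \<chi>2"
    for P a and \<chi>1 \<chi>2 :: "'a \<Rightarrow> complex"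
  proof -
    obtain c where P: "P = {x. \<omega> x = \<omega> c}"
      using block unfolding induced_partition_def by blast
    have "additive_character \<chi>1" using gen1 unfolding generating_character_def by blast
    then show ?thesis
      unfolding P using generating_character_sum_level_set_eq[OF hw gen2 gen1]
        additive_character_sum_level_set_real[OF hw] by blast
  qed
  have "right_dual_partition \<chi>1 (induced_partition \<omega>) = right_dual_partition \<chi>2 (induced_partition \<omega>)"
    if "generating_character \<chi>1" "generating_character \<chi>2" for \<chi>1 \<chi>2 :: "'a \<Rightarrow> complex"
    unfolding right_dual_partition_def using blocks[OF _ that] by simp
  with blocks show ?thesis by blast
qed

end
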